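(* For each of the following monads $T$, the associated monad $D$ is idempotent: (a) the Giry monad $P$ of probability measures on $\mathbf{Meas}$; (b) the monad $M$ of subprobability measures on $\mathbf{Meas}$; (c) the lower Vietoris monad $H$ on $\mathbf{Top}$.
   Context: $\mathbf{Meas}$ is the category of measurable spaces and measurable maps. $PX$ is the set of probability measures on $X$, with the coarsest $\sigma$-algebra making $p\mapsto p(A)$ measurable for every measurable $A\subseteq X$; $\eta_X(x)=\delta_x$; $\mu_X(\rho)(A)=\int_{PX}p(A)\,\rho(dp)$; $Pf$ is pushforward. $M$ is defined identically with subprobability measures ($0\le m(X)\le1$). $\mathbf{Top}$ is the category of topological spaces; $HX$ is the set of closed subsets of $X$ (including $\emptyset$) with topology generated by the sets $\{C: C\cap U\neq\emptyset\}$ for $U\subseteq X$ open; $\eta_X(x)=\overline{\{x\}}$; $\mu_X(\mathcal{C})=\overline{\bigcup_{C\in\mathcal{C}}C}$; $Hf(C)=\overline{f(C)}$. For a monad $T$ on $\mathbb{C}$, $\theta_X:DX\to TX$ denotes the equalizer of $\eta_{TX},T\eta_X:TX\to TTX$; $D$ is a monad with $Dg$ the unique map with $\theta_Z\circ Dg=Tg\circ\theta_Y$, unit $e_X$ the unique map with $\theta_X\circ e_X=\eta_X$, and multiplication $m_X$ the unique map with $\theta_X\circ m_X=\mu_X\circ T\theta_X\circ\theta_{DX}$. A monad is idempotent if its multiplication is an isomorphism. *)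

theory Defs
  imports "HOL-Probability.Probability"
begin

definition meas_iso :: "'a measure \<Rightarrow> 'b measure \<Rightarrow> ('a \<Rightarrow> 'b) \<Rightarrow> bool" where
  "meas_iso A B f \<longleftrightarrow> (\<exists>g. f \<in> A \<rightarrow>\<^sub>M B \<and> g \<in> B \<rightarrow>\<^sub>M A \<and>
      (\<forall>x\<in>space A. g (f x) = x) \<and> (\<forall>y\<in>space B. f (g y) = y))"

text \<open>(a) Giry monad P = prob_algebra, unit return, multiplication join, P f = distr.
  D X is the equalizer of eta_{PX} and P eta_X: the subset of PX with the subspace sigma-algebra.
  theta_X is the inclusion; m_X is determined by theta_X o m_X = mu_X o P theta_X o theta_{DX}.\<close>
definition DP :: "'a measure \<Rightarrow> 'a measure measure" where
  "DP X = restrict_space (prob_algebra X)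
     {p \<in> space (prob_algebra X). return (prob_algebra X) p = distr p (prob_algebra X) (return X)}"

definition mP :: "'a measure \<Rightarrow> 'a measure measure \<Rightarrow> 'a measure" where
  "mP X q = join (distr q (subprob_algebra X) (\<lambda>p. p))"

definition DM :: "'a measure \<Rightarrow> 'a measure measure" where
  "DM X = restrict_space (subprob_algebra X)
     {p \<in> space (subprob_algebra X). return (subprob_algebra X) p = distr p (subprob_algebra X) (return X)}"

definition mM :: "'a measure \<Rightarrow> 'a measure measure \<Rightarrow> 'a measure" where
  "mM X q = join (distr q (subprob_algebra X) (\<lambda>p. p))"

text \<open>(c) Lower Vietoris monad H on Top.  HX: closed sets of X, topology generated by the
  subbasis {C. C meets U}, U open (the whole carrier is included so that the empty set is a point).\<close>
definition lower_vietoris :: "'a topology \<Rightarrow> 'a set topology" where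
  "lower_vietoris X = topology_generated_by
     (insert {C. closedin X C} ((\<lambda>U. {C. closedin X C \<and> C \<inter> U \<noteq> {}}) ` {U. openin X U}))"

definition DH :: "'a topology \<Rightarrow> 'a set topology" where
  "DH X = subtopology (lower_vietoris X)
     {C \<in> topspace (lower_vietoris X).
        (lower_vietoris X) closure_of {C} = (lower_vietoris X) closure_of ((\<lambda>x. X closure_of {x}) ` C)}"

definition mH :: "'a topology \<Rightarrow> 'a set set \<Rightarrow> 'a set" where
  "mH X \<C> = X closure_of (\<Union> ((lower_vietoris X) closure_of \<C>))"

end

theory Submission
  imports Defs
begin

(* For P and M, the equaliser D X consists of the {0,1}-valued probability measures on X,
   with the trace of the Giry sigma-algebra; in particular D_P = D_M.  Evaluating the equaliser
   equation on the measurable set {M. M A = 1} forces p A to be 0 or 1; conversely, a probability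
   measure on the Giry space under which every evaluation M \<mapsto> M A is almost surely constant is
   a Dirac measure.  Applied to the pushforward of a {0,1}-valued measure q on D X, this shows that
   q is the Dirac measure at its barycentre join q, which is itself {0,1}-valued; so join and
   return are mutually inverse between D (D X) and D X.

   For H, D X is the space of irreducible closed sets of X.  Its open sets are the families of
   irreducible closed sets meeting an open U, and its closed sets are the families of irreducible
   closed subsets of a closed F.  The map F \<mapsto> {C irreducible. C \<subseteq> F} is a bijection from the
   irreducible closed sets of X onto those of D X, inverse to the union (which is what mH
   computes there), and F meets U iff its image meets the family of sets meeting U. *)

definition zero_one_measure :: "'a measure \<Rightarrow> 'a measure \<Rightarrow> bool" where
  "zero_one_measure X p \<longleftrightarrow> prob_space p \<and> sets p = sets X \<and> (\<forall>A\<in>sets X. emeasure p A \<in> {0, 1})"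

definition zero_one_algebra :: "'a measure \<Rightarrow> 'a measure measure" where
  "zero_one_algebra X = restrict_space (subprob_algebra X) {p. zero_one_measure X p}"

lemma zero_one_measure_in_subprob_algebra:
  "zero_one_measure X p \<Longrightarrow> p \<in> space (subprob_algebra X)"
  by (auto simp: zero_one_measure_def space_subprob_algebra prob_space_imp_subprob_space)

lemma space_zero_one_algebra: "space (zero_one_algebra X) = {p. zero_one_measure X p}"
  using zero_one_measure_in_subprob_algebra
  by (auto simp: zero_one_algebra_def space_restrict_space)

lemma zero_one_measure_distr:
  assumes p: "zero_one_measure M p" and f: "f \<in> M \<rightarrow>\<^sub>M N"
  shows "zero_one_measure N (distr p N f)"
proof -
  have sp: "sets p = sets M" and "prob_space p" using p by (auto simp: zero_one_measure_def)
  have fp: "f \<in> p \<rightarrow>\<^sub>M N" using f by (simp add: measurable_cong_sets[OF sp refl])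
  have "emeasure (distr p N f) A \<in> {0, 1}" if "A \<in> sets N" for A
    using p measurable_sets[OF fp that] by (simp add: emeasure_distr[OF fp that] zero_one_measure_def)
  then show ?thesis
    using prob_space.prob_space_distr[OF \<open>prob_space p\<close> fp] by (simp add: zero_one_measure_def)
qed

lemma sets_subprob_algebra_least:
  assumes \<Sigma>: "sigma_algebra (space (subprob_algebra X)) \<Sigma>"
    and gen: "\<And>A B. A \<in> sets X \<Longrightarrow> B \<in> sets borel \<Longrightarrow>
      {M \<in> space (subprob_algebra X). emeasure M A \<in> B} \<in> \<Sigma>"
  shows "sets (subprob_algebra X) \<subseteq> \<Sigma>"
proof -
  interpret sigma_algebra "space (subprob_algebra X)" \<Sigma> by fact
  define N where "N = measure_of (space (subprob_algebra X)) \<Sigma> (\<lambda>_. 0)"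
  have sN: "sets N = \<Sigma>" and spN: "space N = space (subprob_algebra X)"
    using sets_measure_of[OF space_closed] space_measure_of[OF space_closed] by (auto simp: N_def)
  have "(\<lambda>M. M) \<in> N \<rightarrow>\<^sub>M subprob_algebra X"
  proof (rule measurable_subprob_algebra)
    fix A assume A: "A \<in> sets X"
    show "(\<lambda>M. emeasure M A) \<in> borel_measurable N"
      using gen[OF A] by (auto simp: measurable_def sN spN vimage_def Int_def conj_commute)
  qed (auto simp: spN space_subprob_algebra)
  from measurable_sets[OF this] show ?thesis
    using sets.sets_into_space by (fastforce simp: sN spN Int_absorb2)
qed

lemma sets_subprob_algebra_emeasure_in:
  "A \<in> sets X \<Longrightarrow> B \<in> sets borel \<Longrightarrow>
    {M \<in> space (subprob_algebra X). emeasure M A \<in> B} \<in> sets (subprob_algebra X)"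
  using measurable_sets[OF measurable_emeasure_subprob_algebra] by (simp add: vimage_def Int_def conj_commute)

lemma emeasure_join_zero_one:
  assumes \<mu>: "sets \<mu> = sets (subprob_algebra X)" and A: "A \<in> sets X"
    and zo: "AE M in \<mu>. emeasure M A \<in> {0, 1}"
  shows "emeasure (join \<mu>) A = emeasure \<mu> {M \<in> space \<mu>. emeasure M A = 1}"
proof -
  have E: "{M \<in> space \<mu>. emeasure M A = 1} \<in> sets \<mu>"
    using sets_subprob_algebra_emeasure_in[OF A, of "{1}"] by (simp add: \<mu> sets_eq_imp_space_eq[OF \<mu>])
  have "emeasure (join \<mu>) A = (\<integral>\<^sup>+ M. emeasure M A \<partial>\<mu>)" using \<mu> A by (rule emeasure_join)
  also have "\<dots> = (\<integral>\<^sup>+ M. indicator {M \<in> space \<mu>. emeasure M A = 1} M \<partial>\<mu>)"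
    using zo by (intro nn_integral_cong_AE) (auto simp: indicator_def)
  also have "\<dots> = emeasure \<mu> {M \<in> space \<mu>. emeasure M A = 1}" using E by (rule nn_integral_indicator)
  finally show ?thesis .
qed

lemma sigma_algebra_emeasure_eq_indicator:
  assumes \<mu>: "prob_space \<mu>" "sets \<mu> = sets N" and r: "r \<in> space N"
  shows "sigma_algebra (space N) {A \<in> sets N. emeasure \<mu> A = indicator A r}"
proof -
  interpret prob_space \<mu> by fact
  have sp: "space \<mu> = space N" using \<mu>(2) by (rule sets_eq_imp_space_eq)
  show ?thesis
    unfolding sigma_algebra_iff2
  proof (intro conjI ballI allI impI)
    show "{A \<in> sets N. emeasure \<mu> A = indicator A r} \<subseteq> Pow (space N)"
      using sets.sets_into_space by auto
    show "{} \<in> {A \<in> sets N. emeasure \<mu> A = indicator A r}" by simp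
  next
    fix A assume "A \<in> {A \<in> sets N. emeasure \<mu> A = indicator A r}"
    then have A: "A \<in> sets \<mu>" "emeasure \<mu> A = indicator A r" by (auto simp: \<mu>(2))
    have "emeasure \<mu> (space N - A) = 1 - indicator A r"
      using emeasure_compl[OF A(1)] A(2) emeasure_space_1 by (simp add: sp split: split_indicator)
    then show "space N - A \<in> {A \<in> sets N. emeasure \<mu> A = indicator A r}"
      using A(1) r by (auto simp: \<mu>(2) indicator_def)
  next
    fix A :: "nat \<Rightarrow> _" assume "range A \<subseteq> {A \<in> sets N. emeasure \<mu> A = indicator A r}"
    then have A: "range A \<subseteq> sets \<mu>" "\<And>i. emeasure \<mu> (A i) = indicator (A i) r"
      by (auto simp: \<mu>(2))
    have "emeasure \<mu> (\<Union>i. A i) = indicator (\<Union>i. A i) r"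
    proof (cases "\<exists>i. r \<in> A i")
      case True
      then obtain i where "r \<in> A i" by blast
      then have "emeasure \<mu> (A i) = 1" using A(2) by simp
      moreover have "emeasure \<mu> (A i) \<le> emeasure \<mu> (\<Union>i. A i)"
        using A(1) by (intro emeasure_mono) auto
      ultimately show ?thesis using True emeasure_le_1 by (auto intro: antisym)
    next
      case False
      then show ?thesis using A by (simp add: emeasure_UN_eq_0)
    qed
    then show "(\<Union>i. A i) \<in> {A \<in> sets N. emeasure \<mu> A = indicator A r}"
      using A(1) by (auto simp: \<mu>(2))
  qed
qed

lemma eq_return_if_AE_emeasure_eq:
  assumes \<mu>: "prob_space \<mu>" "sets \<mu> = sets (subprob_algebra X)" and r: "r \<in> space (subprob_algebra X)"
    and const: "\<And>A. A \<in> sets X \<Longrightarrow> AE M in \<mu>. emeasure M A = emeasure r A"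
  shows "\<mu> = return (subprob_algebra X) r"
proof -
  let ?S = "subprob_algebra X"
  have sp: "space \<mu> = space ?S" using \<mu>(2) by (rule sets_eq_imp_space_eq)
  have "sets ?S \<subseteq> {\<A> \<in> sets ?S. emeasure \<mu> \<A> = indicator \<A> r}"
  proof (rule sets_subprob_algebra_least)
    show "sigma_algebra (space ?S) {\<A> \<in> sets ?S. emeasure \<mu> \<A> = indicator \<A> r}"
      using \<mu> r by (rule sigma_algebra_emeasure_eq_indicator)
  next
    fix A B assume A: "A \<in> sets X" and B: "(B :: ennreal set) \<in> sets borel"
    define G where "G = {M \<in> space ?S. emeasure M A \<in> B}"
    have G: "G \<in> sets \<mu>"
      unfolding G_def \<mu>(2) using A B by (rule sets_subprob_algebra_emeasure_in)
    have "AE M in \<mu>. M \<in> G \<longleftrightarrow> r \<in> G"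
      using const[OF A] AE_space by eventually_elim (use r in \<open>auto simp: G_def sp\<close>)
    then have "emeasure \<mu> G = indicator G r"
      using G \<mu>(1) by (cases "r \<in> G")
        (auto simp: prob_space.emeasure_eq_1_AE AE_iff_null_sets[OF G, symmetric])
    then show "G \<in> {\<A> \<in> sets ?S. emeasure \<mu> \<A> = indicator \<A> r}" using G by (simp add: \<mu>(2))
  qed
  then show ?thesis
    by (intro measure_eqI) (auto simp: \<mu>(2))
qed

lemma zero_one_measure_eq_return_join:
  assumes \<mu>: "zero_one_measure (subprob_algebra X) \<mu>"
    and zo: "\<And>A. A \<in> sets X \<Longrightarrow> AE M in \<mu>. emeasure M A \<in> {0, 1}"
  shows "\<mu> = return (subprob_algebra X) (join \<mu>)"
proof (rule eq_return_if_AE_emeasure_eq)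
  show "prob_space \<mu>" and s\<mu>: "sets \<mu> = sets (subprob_algebra X)"
    using \<mu> by (auto simp: zero_one_measure_def)
  show "join \<mu> \<in> space (subprob_algebra X)"
    using measurable_space[OF measurable_join zero_one_measure_in_subprob_algebra[OF \<mu>]] .
  fix A assume A: "A \<in> sets X"
  define E where "E = {M \<in> space \<mu>. emeasure M A = 1}"
  have E: "E \<in> sets \<mu>"
    using sets_subprob_algebra_emeasure_in[OF A, of "{1}"] by (simp add: E_def s\<mu> sets_eq_imp_space_eq[OF s\<mu>])
  have join: "emeasure (join \<mu>) A = emeasure \<mu> E"
    unfolding E_def using s\<mu> A zo[OF A] by (rule emeasure_join_zero_one)
  consider "emeasure \<mu> E = 1" | "emeasure \<mu> E = 0" using \<mu> E s\<mu> by (auto simp: zero_one_measure_def)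
  then show "AE M in \<mu>. emeasure M A = emeasure (join \<mu>) A"
  proof cases
    case 1
    then have "AE M in \<mu>. M \<in> E" using E \<open>prob_space \<mu>\<close> by (simp add: prob_space.AE_in_set_eq_1 measure_def)
    then show ?thesis by eventually_elim (simp add: E_def join[unfolded 1])
  next
    case 2
    then have "AE M in \<mu>. M \<notin> E" using E by (intro AE_not_in null_setsI)
    with zo[OF A] AE_space show ?thesis by eventually_elim (auto simp: E_def join[unfolded 2])
  qed
qed

lemma return_eq_distr_return_iff_zero_one:
  assumes p: "p \<in> space (subprob_algebra X)"
  shows "return (subprob_algebra X) p = distr p (subprob_algebra X) (return X) \<longleftrightarrow> zero_one_measure X p"
proof
  let ?S = "subprob_algebra X"
  have sp: "sets p = sets X" using p by (simp add: space_subprob_algebra)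
  have ret: "return X \<in> p \<rightarrow>\<^sub>M ?S" by (simp add: measurable_cong_sets[OF sp refl])
  have ret_preimage: "emeasure (distr p ?S (return X)) {M \<in> space ?S. emeasure M A \<in> B}
      = emeasure p {x \<in> space X. indicator A x \<in> B}" if A: "A \<in> sets X" and B: "B \<in> sets borel" for A B
  proof -
    have "return X -` {M \<in> space ?S. emeasure M A \<in> B} \<inter> space X = {x \<in> space X. indicator A x \<in> B}"
      using A by (auto simp: space_subprob_algebra subprob_space_return)
    then show ?thesis
      using sets_subprob_algebra_emeasure_in[OF A B]
      by (simp add: emeasure_distr[OF ret] sets_eq_imp_space_eq[OF sp])
  qed
  assume eq: "return ?S p = distr p ?S (return X)"
  have ev: "emeasure p {x \<in> space X. indicator A x \<in> B} = indicator {M \<in> space ?S. emeasure M A \<in> B} p"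
    if A: "A \<in> sets X" and B: "B \<in> sets borel" for A B
    using sets_subprob_algebra_emeasure_in[OF A B] by (simp flip: ret_preimage[OF A B] eq)
  have "emeasure p (space p) = 1"
    using ev[OF sets.top, of UNIV] p by (simp add: sets_eq_imp_space_eq[OF sp])
  moreover have "emeasure p A \<in> {0, 1}" if A: "A \<in> sets X" for A
  proof -
    have "{x \<in> space X. indicator A x \<in> {1 :: ennreal}} = A"
      using sets.sets_into_space[OF A] by (auto split: split_indicator)
    then show ?thesis using ev[OF A, of "{1}"] by (auto simp: indicator_def)
  qed
  ultimately show "zero_one_measure X p" using sp by (auto simp: zero_one_measure_def intro: prob_spaceI)
next
  let ?S = "subprob_algebra X"
  assume p: "zero_one_measure X p"
  then have sp: "sets X = sets p" by (simp add: zero_one_measure_def)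
  let ?\<mu> = "distr p ?S (return X)"
  have "?\<mu> = return ?S (join ?\<mu>)"
  proof (rule zero_one_measure_eq_return_join)
    show "zero_one_measure ?S ?\<mu>" using p return_measurable by (rule zero_one_measure_distr)
    fix A assume "A \<in> sets X"
    then show "AE M in ?\<mu>. emeasure M A \<in> {0, 1}"
      using sets_subprob_algebra_emeasure_in[of A X "{0, 1}"]
      by (subst AE_distr_iff) (auto simp: measurable_cong_sets[OF sp[symmetric] refl] split: split_indicator)
  qed
  then show "return ?S p = ?\<mu>" by (simp add: join_return'[OF sp])
qed

lemma return_eq_distr_restrict_space_iff:
  assumes p: "p \<in> \<Omega>" and f: "f \<in> p \<rightarrow>\<^sub>M N" "f \<in> space p \<rightarrow> \<Omega>"
  shows "return (restrict_space N \<Omega>) p = distr p (restrict_space N \<Omega>) f \<longleftrightarrow> return N p = distr p N f"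
proof -
  have fR: "f \<in> p \<rightarrow>\<^sub>M restrict_space N \<Omega>" using f by (rule measurable_restrict_space2[rotated])
  have trace: "emeasure (return (restrict_space N \<Omega>) p) (\<Omega> \<inter> G)
        = emeasure (distr p (restrict_space N \<Omega>) f) (\<Omega> \<inter> G)
      \<longleftrightarrow> emeasure (return N p) G = emeasure (distr p N f) G"
    if G: "G \<in> sets N" for G
  proof -
    have "\<Omega> \<inter> G \<in> sets (restrict_space N \<Omega>)" using G by (auto simp: sets_restrict_space)
    moreover have "f -` (\<Omega> \<inter> G) \<inter> space p = f -` G \<inter> space p" using f(2) by auto
    ultimately show ?thesis
      using G p by (simp add: emeasure_distr[OF fR] emeasure_distr[OF f(1)] split: split_indicator)
  qed
  show ?thesis
  proof
    assume eq: "return (restrict_space N \<Omega>) p = distr p (restrict_space N \<Omega>) f"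
    show "return N p = distr p N f"
      by (rule measure_eqI) (simp_all add: trace[symmetric] eq del: emeasure_return)
  next
    assume eq: "return N p = distr p N f"
    show "return (restrict_space N \<Omega>) p = distr p (restrict_space N \<Omega>) f"
      by (rule measure_eqI) (auto simp: sets_restrict_space trace eq simp del: emeasure_return)
  qed
qed

lemma restrict_restrict_space_subset:
  assumes \<Omega>: "\<Omega> \<inter> space M \<in> sets M" and Z: "Z \<subseteq> \<Omega>"
  shows "restrict_space (restrict_space M \<Omega>) Z = restrict_space M Z"
proof -
  have "(\<inter>) Z ` sets (restrict_space M \<Omega>) = (\<inter>) Z ` sets M"
    unfolding sets_restrict_space image_image using Z by (intro image_cong) auto
  moreover have "Z \<inter> space (restrict_space M \<Omega>) = Z \<inter> space M"
    using Z by (auto simp: space_restrict_space)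
  moreover have "emeasure (restrict_space M \<Omega>) A = emeasure M A"
    if "A \<in> sigma_sets (Z \<inter> space M) ((\<inter>) Z ` sets M)" for A
    using sigma_sets_into_sp[OF _ that] Z by (intro emeasure_restrict_space[OF \<Omega>]) (auto dest: sets.sets_into_space)
  ultimately show ?thesis
    unfolding restrict_space_def[of "restrict_space M \<Omega>"] restrict_space_def[of M Z]
    by (auto intro!: measure_of_eq dest: sets.sets_into_space)
qed

lemma DM_eq_zero_one_algebra: "DM X = zero_one_algebra X"
proof -
  have "{p \<in> space (subprob_algebra X). return (subprob_algebra X) p = distr p (subprob_algebra X) (return X)}
      = {p. zero_one_measure X p}"
    using return_eq_distr_return_iff_zero_one zero_one_measure_in_subprob_algebra by blast
  then show ?thesis by (simp add: DM_def zero_one_algebra_def)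
qed

lemma DP_eq_zero_one_algebra: "DP X = zero_one_algebra X"
proof -
  let ?S = "subprob_algebra X"
  have "return (prob_algebra X) p = distr p (prob_algebra X) (return X) \<longleftrightarrow> zero_one_measure X p"
    if p: "p \<in> space (prob_algebra X)" for p
  proof -
    have sp: "sets p = sets X" and "prob_space p" using p by (auto simp: space_prob_algebra)
    have "return (prob_algebra X) p = distr p (prob_algebra X) (return X)
        \<longleftrightarrow> return ?S p = distr p ?S (return X)"
      unfolding prob_algebra_def using \<open>prob_space p\<close>
      by (intro return_eq_distr_restrict_space_iff)
        (auto simp: measurable_cong_sets[OF sp refl] sets_eq_imp_space_eq[OF sp] prob_space_return)
    also have "\<dots> \<longleftrightarrow> zero_one_measure X p"
      using p by (intro return_eq_distr_return_iff_zero_one)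
        (auto simp: space_prob_algebra space_subprob_algebra prob_space_imp_subprob_space)
    finally show ?thesis .
  qed
  then have "{p \<in> space (prob_algebra X). return (prob_algebra X) p = distr p (prob_algebra X) (return X)}
      = {p. zero_one_measure X p}"
    by (auto simp: space_prob_algebra zero_one_measure_def)
  then have "DP X = restrict_space (restrict_space ?S {M. prob_space M}) {p. zero_one_measure X p}"
    by (simp add: DP_def prob_algebra_def)
  also have "\<dots> = zero_one_algebra X"
    unfolding zero_one_algebra_def
  proof (rule restrict_restrict_space_subset)
    have "prob_space M \<longleftrightarrow> emeasure M (space X) \<in> {1}" if "M \<in> space ?S" for M
      using that sets_eq_imp_space_eq[of M X]
      by (auto simp: space_subprob_algebra intro: prob_spaceI dest: prob_space.emeasure_space_1)
    then have "{M. prob_space M} \<inter> space ?S = {M \<in> space ?S. emeasure M (space X) \<in> {1}}" by blast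
    then show "{M. prob_space M} \<inter> space ?S \<in> sets ?S"
      using sets_subprob_algebra_emeasure_in[OF sets.top] by simp
  qed (auto simp: zero_one_measure_def)
  finally show ?thesis .
qed

lemma eq_return_restrict_space_if_distr:
  assumes q: "sets q = sets (restrict_space N \<Omega>)" and r: "r \<in> \<Omega>"
    and eq: "distr q N (\<lambda>x. x) = return N r"
  shows "q = return (restrict_space N \<Omega>) r"
proof (rule measure_eqI)
  show "sets q = sets (return (restrict_space N \<Omega>) r)" using q by simp
  fix T assume "T \<in> sets q"
  then obtain G where G: "G \<in> sets N" and T: "T = \<Omega> \<inter> G" by (auto simp: q sets_restrict_space)
  have incl: "(\<lambda>x. x) \<in> q \<rightarrow>\<^sub>M N"
    by (simp add: measurable_cong_sets[OF q refl] measurable_restrict_space1)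
  have "(\<lambda>x. x) -` G \<inter> space q = T"
    using sets.sets_into_space[OF G] by (auto simp: T sets_eq_imp_space_eq[OF q] space_restrict_space)
  then have "emeasure q T = emeasure (distr q N (\<lambda>x. x)) G" by (simp add: emeasure_distr[OF incl G])
  also have "\<dots> = emeasure (return (restrict_space N \<Omega>) r) T"
    using G r by (simp add: eq T sets_restrict_space split: split_indicator)
  finally show "emeasure q T = emeasure (return (restrict_space N \<Omega>) r) T" .
qed

lemma measurable_zero_one_algebra_incl: "(\<lambda>p. p) \<in> zero_one_algebra X \<rightarrow>\<^sub>M subprob_algebra X"
  unfolding zero_one_algebra_def by (intro measurable_restrict_space1 measurable_ident_sets refl)

lemma join_zero_one_algebra:
  assumes q: "zero_one_measure (zero_one_algebra X) q"
  shows "zero_one_measure X (join (distr q (subprob_algebra X) (\<lambda>p. p)))"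
    and "return (zero_one_algebra X) (join (distr q (subprob_algebra X) (\<lambda>p. p))) = q"
proof -
  let ?S = "subprob_algebra X" and ?\<mu> = "distr q (subprob_algebra X) (\<lambda>p. p)"
  let ?r = "join ?\<mu>"
  have sq: "sets q = sets (zero_one_algebra X)" using q by (simp add: zero_one_measure_def)
  have \<mu>: "zero_one_measure ?S ?\<mu>" using q measurable_zero_one_algebra_incl by (rule zero_one_measure_distr)
  have AE_points: "AE M in ?\<mu>. P M"
    if "{M \<in> space ?S. P M} \<in> sets ?S" "\<And>p. zero_one_measure X p \<Longrightarrow> P p" for P
    using that by (subst AE_distr_iff) (auto simp: measurable_cong_sets[OF sq refl]
        measurable_zero_one_algebra_incl sets_eq_imp_space_eq[OF sq] space_zero_one_algebra)
  have zo: "AE M in ?\<mu>. emeasure M A \<in> {0, 1}" if "A \<in> sets X" for A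
    using that by (intro AE_points sets_subprob_algebra_emeasure_in) (auto simp: zero_one_measure_def)
  have prob: "AE M in ?\<mu>. emeasure M (space X) \<in> {1}"
    by (intro AE_points sets_subprob_algebra_emeasure_in)
      (auto simp: zero_one_measure_def, metis prob_space.emeasure_space_1 sets_eq_imp_space_eq)
  have ret: "?\<mu> = return ?S ?r" using \<mu> zo by (rule zero_one_measure_eq_return_join)
  have r: "?r \<in> space ?S"
    using measurable_space[OF measurable_join zero_one_measure_in_subprob_algebra[OF \<mu>]] .
  then have sr: "sets ?r = sets X" by (simp add: space_subprob_algebra)
  have AE_ret: "(AE M in ?\<mu>. emeasure M A \<in> B) \<longleftrightarrow> emeasure ?r A \<in> B"
    if "A \<in> sets X" "B \<in> sets borel" for A B
    using r sets_subprob_algebra_emeasure_in[OF that] by (subst ret) (simp add: AE_return pred_def)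
  have "emeasure ?r A \<in> {0, 1}" if "A \<in> sets X" for A
    using zo[OF that] AE_ret[OF that, of "{0, 1}"] by simp
  moreover have "emeasure ?r (space ?r) = 1"
    using prob AE_ret[OF sets.top, of "{1}"] by (simp add: sets_eq_imp_space_eq[OF sr])
  ultimately show zo_r: "zero_one_measure X ?r"
    using sr by (auto simp: zero_one_measure_def intro: prob_spaceI)
  show "return (zero_one_algebra X) ?r = q"
    using sq zo_r ret unfolding zero_one_algebra_def
    by (intro eq_return_restrict_space_if_distr[symmetric]) auto
qed

lemma meas_iso_join_zero_one_algebra:
  "meas_iso (zero_one_algebra (zero_one_algebra X)) (zero_one_algebra X)
     (\<lambda>q. join (distr q (subprob_algebra X) (\<lambda>p. p)))"
  unfolding meas_iso_def
proof (intro exI conjI ballI)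
  let ?S = "subprob_algebra X" and ?Y = "zero_one_algebra X"
  have "(\<lambda>q. join (distr q ?S (\<lambda>p. p))) \<in> subprob_algebra ?Y \<rightarrow>\<^sub>M ?S"
    using measurable_distr[OF measurable_zero_one_algebra_incl] measurable_join
    by (rule measurable_compose)
  then have "(\<lambda>q. join (distr q ?S (\<lambda>p. p)))
      \<in> zero_one_algebra ?Y \<rightarrow>\<^sub>M restrict_space ?S {p. zero_one_measure X p}"
    using join_zero_one_algebra(1) unfolding zero_one_algebra_def[of ?Y]
    by (intro measurable_restrict_space2 measurable_restrict_space1) (auto simp: space_restrict_space)
  then show "(\<lambda>q. join (distr q ?S (\<lambda>p. p))) \<in> zero_one_algebra ?Y \<rightarrow>\<^sub>M ?Y"
    by (simp only: zero_one_algebra_def[of X, symmetric])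
  show "return ?Y \<in> ?Y \<rightarrow>\<^sub>M zero_one_algebra ?Y"
    unfolding zero_one_algebra_def[of ?Y]
    by (intro measurable_restrict_space2 return_measurable)
      (auto simp: zero_one_measure_def prob_space_return split: split_indicator)
  show "return ?Y (join (distr q ?S (\<lambda>p. p))) = q" if "q \<in> space (zero_one_algebra ?Y)" for q
    using that join_zero_one_algebra(2) by (simp add: space_zero_one_algebra)
  fix p assume p: "p \<in> space ?Y"
  have "distr (return ?Y p) ?S (\<lambda>p. p) = return ?S p"
    using measurable_zero_one_algebra_incl p by (rule distr_return)
  then show "join (distr (return ?Y p) ?S (\<lambda>p. p)) = p"
    using p by (auto simp: space_zero_one_algebra zero_one_measure_def
        intro!: join_return prob_space_imp_subprob_space)
qed

definition irreducible_closedin :: "'a topology \<Rightarrow> 'a set \<Rightarrow> bool" where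
  "irreducible_closedin X C \<longleftrightarrow> closedin X C \<and> C \<noteq> {} \<and>
     (\<forall>U V. openin X U \<longrightarrow> openin X V \<longrightarrow> C \<inter> U \<noteq> {} \<longrightarrow> C \<inter> V \<noteq> {} \<longrightarrow> C \<inter> U \<inter> V \<noteq> {})"

definition irr_hitting :: "'a topology \<Rightarrow> 'a set \<Rightarrow> 'a set set" where
  "irr_hitting X U = {C. irreducible_closedin X C \<and> C \<inter> U \<noteq> {}}"

definition irr_within :: "'a topology \<Rightarrow> 'a set \<Rightarrow> 'a set set" where
  "irr_within X F = {C. irreducible_closedin X C \<and> C \<subseteq> F}"

lemma irreducible_closedin_imp_closedin: "irreducible_closedin X C \<Longrightarrow> closedin X C"
  by (simp add: irreducible_closedin_def)

lemma irreducible_closedin_subset_topspace: "irreducible_closedin X C \<Longrightarrow> C \<subseteq> topspace X"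
  by (simp add: irreducible_closedin_def closedin_subset)

lemma closure_of_singleton_Int_open_iff:
  assumes "openin X U" "x \<in> topspace X"
  shows "X closure_of {x} \<inter> U \<noteq> {} \<longleftrightarrow> x \<in> U"
  using assms by (auto simp: in_closure_of)

lemma irreducible_closedin_closure_of_singleton:
  assumes x: "x \<in> topspace X"
  shows "irreducible_closedin X (X closure_of {x})"
proof -
  have "x \<in> X closure_of {x}" using x by (simp add: in_closure_of)
  moreover have "X closure_of {x} \<inter> U \<inter> V \<noteq> {}"
    if "openin X U" "openin X V" "X closure_of {x} \<inter> U \<noteq> {}" "X closure_of {x} \<inter> V \<noteq> {}" for U V
    using that closure_of_singleton_Int_open_iff[OF _ x] \<open>x \<in> X closure_of {x}\<close> by blast
  ultimately show ?thesis
    unfolding irreducible_closedin_def by (intro conjI closedin_closure_of allI impI) auto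
qed

lemma irr_hitting_Int:
  assumes "openin X U" "openin X V"
  shows "irr_hitting X U \<inter> irr_hitting X V = irr_hitting X (U \<inter> V)"
  using assms by (auto simp: irr_hitting_def irreducible_closedin_def Int_assoc)

lemma irr_within_Int_irr_hitting:
  assumes F: "closedin X F"
  shows "irr_within X F \<inter> irr_hitting X U \<noteq> {} \<longleftrightarrow> F \<inter> U \<noteq> {}"
proof
  assume "F \<inter> U \<noteq> {}"
  then obtain x where x: "x \<in> F" "x \<in> U" by blast
  then have "x \<in> topspace X" using closedin_subset[OF F] by blast
  moreover have "X closure_of {x} \<subseteq> F" using x F by (simp add: closure_of_minimal)
  ultimately have "X closure_of {x} \<in> irr_within X F \<inter> irr_hitting X U"
    using x irreducible_closedin_closure_of_singleton
    by (auto simp: irr_within_def irr_hitting_def in_closure_of)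
  then show "irr_within X F \<inter> irr_hitting X U \<noteq> {}" by blast
qed (auto simp: irr_within_def irr_hitting_def)

lemma Union_irr_within:
  assumes F: "closedin X F"
  shows "\<Union>(irr_within X F) = F"
proof -
  have "x \<in> \<Union>(irr_within X F)" if "x \<in> F" for x
    using irr_within_Int_irr_hitting[OF F, of "{x}"] that by (auto simp: irr_hitting_def)
  then show ?thesis by (auto simp: irr_within_def)
qed

lemma topspace_lower_vietoris: "topspace (lower_vietoris X) = {C. closedin X C}"
  unfolding lower_vietoris_def by auto

lemma openin_lower_vietoris_hits:
  "openin X U \<Longrightarrow> openin (lower_vietoris X) {C. closedin X C \<and> C \<inter> U \<noteq> {}}"
  unfolding lower_vietoris_def by (rule topology_generated_by_Basis) auto

lemma closedin_lower_vietoris_subsets: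
  assumes F: "closedin X F"
  shows "closedin (lower_vietoris X) {C. closedin X C \<and> C \<subseteq> F}"
proof -
  have "topspace (lower_vietoris X) - {C. closedin X C \<and> C \<subseteq> F}
      = {C. closedin X C \<and> C \<inter> (topspace X - F) \<noteq> {}}"
    by (auto simp: topspace_lower_vietoris dest: closedin_subset)
  moreover have "openin (lower_vietoris X) {C. closedin X C \<and> C \<inter> (topspace X - F) \<noteq> {}}"
    using openin_diff[OF openin_topspace F] by (rule openin_lower_vietoris_hits)
  ultimately show ?thesis
    unfolding closedin_def[of "lower_vietoris X"] topspace_lower_vietoris by auto
qed

lemma openin_lower_vietoris_imp_irr_hitting:
  assumes "openin (lower_vietoris X) T"
  obtains U where "openin X U" "T \<inter> {C. irreducible_closedin X C} = irr_hitting X U"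
proof -
  have "generate_topology_on
      (insert {C. closedin X C} ((\<lambda>U. {C. closedin X C \<and> C \<inter> U \<noteq> {}}) ` {U. openin X U})) T"
    using assms unfolding lower_vietoris_def by (rule openin_topology_generated_by)
  then have "\<exists>U. openin X U \<and> T \<inter> {C. irreducible_closedin X C} = irr_hitting X U"
  proof (induction rule: generate_topology_on.induct)
    case Empty
    show ?case by (intro exI[of _ "{}"]) (auto simp: irr_hitting_def)
  next
    case (Int T T')
    then obtain U U' where "openin X U" "T \<inter> {C. irreducible_closedin X C} = irr_hitting X U"
      and "openin X U'" "T' \<inter> {C. irreducible_closedin X C} = irr_hitting X U'" by blast
    then show ?case using irr_hitting_Int by (intro exI[of _ "U \<inter> U'"]) blast
  next
    case (UN K)
    then obtain U where "\<forall>T\<in>K. openin X (U T) \<and> T \<inter> {C. irreducible_closedin X C} = irr_hitting X (U T)"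
      by metis
    then show ?case by (intro exI[of _ "\<Union>(U ` K)"]) (auto simp: irr_hitting_def)
  next
    case (Basis T)
    then show ?case
    proof
      assume "T = {C. closedin X C}"
      then show ?case
        using closedin_subset by (intro exI[of _ "topspace X"])
          (fastforce simp: irr_hitting_def irreducible_closedin_def)
    next
      assume "T \<in> (\<lambda>U. {C. closedin X C \<and> C \<inter> U \<noteq> {}}) ` {U. openin X U}"
      then show ?case by (auto simp: irr_hitting_def irreducible_closedin_def)
    qed
  qed
  with that show ?thesis by blast
qed

lemma in_lower_vietoris_closure_of_points_iff:
  assumes C: "closedin X C"
  shows "C \<in> lower_vietoris X closure_of ((\<lambda>x. X closure_of {x}) ` C) \<longleftrightarrow> irreducible_closedin X C"
proof
  assume "C \<in> lower_vietoris X closure_of ((\<lambda>x. X closure_of {x}) ` C)"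
  then have near: "\<exists>x\<in>C. X closure_of {x} \<in> T" if "C \<in> T" "openin (lower_vietoris X) T" for T
    using that unfolding in_closure_of by blast
  have "C \<in> topspace (lower_vietoris X)" using C by (simp add: topspace_lower_vietoris)
  then have ne: "C \<noteq> {}" using near[OF _ openin_topspace] by blast
  have pw: "C \<inter> U \<inter> V \<noteq> {}"
    if U: "openin X U" and V: "openin X V" and "C \<inter> U \<noteq> {}" "C \<inter> V \<noteq> {}" for U V
  proof -
    let ?T = "{D. closedin X D \<and> D \<inter> U \<noteq> {}} \<inter> {D. closedin X D \<and> D \<inter> V \<noteq> {}}"
    have "openin (lower_vietoris X) ?T"
      using openin_lower_vietoris_hits[OF U] openin_lower_vietoris_hits[OF V] by (rule openin_Int)
    moreover have "C \<in> ?T" using C that by simp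
    ultimately obtain x where x: "x \<in> C" "X closure_of {x} \<in> ?T" using near by meson
    have "x \<in> topspace X" using x(1) closedin_subset[OF C] by blast
    then have "x \<in> U \<inter> V"
      using x(2) closure_of_singleton_Int_open_iff[OF U] closure_of_singleton_Int_open_iff[OF V] by simp
    then show ?thesis using x(1) by blast
  qed
  show "irreducible_closedin X C" unfolding irreducible_closedin_def by (intro conjI C ne allI impI pw)
next
  assume irr: "irreducible_closedin X C"
  show "C \<in> lower_vietoris X closure_of ((\<lambda>x. X closure_of {x}) ` C)"
    unfolding in_closure_of
  proof (intro conjI allI impI)
    show "C \<in> topspace (lower_vietoris X)" using C by (simp add: topspace_lower_vietoris)
    fix T assume T: "C \<in> T \<and> openin (lower_vietoris X) T"
    then obtain U where U: "openin X U" "T \<inter> {C. irreducible_closedin X C} = irr_hitting X U"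
      using openin_lower_vietoris_imp_irr_hitting by blast
    have "C \<in> irr_hitting X U" using T irr U(2) by blast
    then obtain x where x: "x \<in> C" "x \<in> U" by (auto simp: irr_hitting_def)
    then have "x \<in> topspace X" using closedin_subset[OF C] by blast
    then have "X closure_of {x} \<in> irr_hitting X U"
      using irreducible_closedin_closure_of_singleton closure_of_singleton_Int_open_iff[OF U(1)] x(2)
      by (simp add: irr_hitting_def)
    then have "X closure_of {x} \<in> T" using U(2) by blast
    then show "\<exists>y. y \<in> (\<lambda>x. X closure_of {x}) ` C \<and> y \<in> T" using x by blast
  qed
qed

lemma points_in_lower_vietoris_closure_of:
  assumes irr: "irreducible_closedin X C"
  shows "(\<lambda>x. X closure_of {x}) ` C \<subseteq> lower_vietoris X closure_of {C}"
proof clarify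
  fix x assume x: "x \<in> C"
  have C: "closedin X C" using irr by (rule irreducible_closedin_imp_closedin)
  have x_irr: "irreducible_closedin X (X closure_of {x})"
    using x irreducible_closedin_subset_topspace[OF irr] by (intro irreducible_closedin_closure_of_singleton) blast
  show "X closure_of {x} \<in> lower_vietoris X closure_of {C}"
    unfolding in_closure_of
  proof (intro conjI allI impI)
    show "X closure_of {x} \<in> topspace (lower_vietoris X)" by (simp add: topspace_lower_vietoris)
    fix T assume T: "X closure_of {x} \<in> T \<and> openin (lower_vietoris X) T"
    then obtain U where U: "openin X U" "T \<inter> {C. irreducible_closedin X C} = irr_hitting X U"
      using openin_lower_vietoris_imp_irr_hitting by blast
    have "X closure_of {x} \<in> irr_hitting X U" using T x_irr U(2) by blast
    moreover have "X closure_of {x} \<subseteq> C" using x C by (simp add: closure_of_minimal)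
    ultimately have "C \<in> irr_hitting X U" using irr by (auto simp: irr_hitting_def)
    then show "\<exists>y. y \<in> {C} \<and> y \<in> T" using U(2) by blast
  qed
qed

lemma DH_eq_subtopology: "DH X = subtopology (lower_vietoris X) {C. irreducible_closedin X C}"
proof -
  let ?L = "lower_vietoris X" and ?\<eta> = "\<lambda>x. X closure_of {x}"
  have "?L closure_of {C} = ?L closure_of (?\<eta> ` C) \<longleftrightarrow> irreducible_closedin X C"
    if C: "closedin X C" for C
  proof
    assume "?L closure_of {C} = ?L closure_of (?\<eta> ` C)"
    moreover have "C \<in> ?L closure_of {C}" using C by (simp add: in_closure_of topspace_lower_vietoris)
    ultimately show "irreducible_closedin X C"
      using in_lower_vietoris_closure_of_points_iff[OF C] by simp
  next
    assume irr: "irreducible_closedin X C"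
    then have "C \<in> ?L closure_of (?\<eta> ` C)" using in_lower_vietoris_closure_of_points_iff[OF C] by simp
    then have "?L closure_of {C} \<subseteq> ?L closure_of (?\<eta> ` C)" by (simp add: closure_of_minimal)
    moreover have "?L closure_of (?\<eta> ` C) \<subseteq> ?L closure_of {C}"
      using points_in_lower_vietoris_closure_of[OF irr] by (simp add: closure_of_minimal)
    ultimately show "?L closure_of {C} = ?L closure_of (?\<eta> ` C)" by blast
  qed
  then show ?thesis
    unfolding DH_def topspace_lower_vietoris
    by (metis (mono_tags, lifting) irreducible_closedin_imp_closedin mem_Collect_eq)
qed

lemma topspace_DH: "topspace (DH X) = {C. irreducible_closedin X C}"
  using irreducible_closedin_imp_closedin
  by (auto simp: DH_eq_subtopology topspace_lower_vietoris)

lemma openin_DH_iff: "openin (DH X) \<O> \<longleftrightarrow> (\<exists>U. openin X U \<and> \<O> = irr_hitting X U)"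
proof
  assume "openin (DH X) \<O>"
  then obtain T where T: "openin (lower_vietoris X) T" "\<O> = T \<inter> {C. irreducible_closedin X C}"
    by (auto simp: DH_eq_subtopology openin_subtopology)
  then show "\<exists>U. openin X U \<and> \<O> = irr_hitting X U"
    using openin_lower_vietoris_imp_irr_hitting by metis
next
  assume "\<exists>U. openin X U \<and> \<O> = irr_hitting X U"
  then obtain U where U: "openin X U" "\<O> = irr_hitting X U" by blast
  then have "\<O> = {C. closedin X C \<and> C \<inter> U \<noteq> {}} \<inter> {C. irreducible_closedin X C}"
    using irreducible_closedin_imp_closedin by (auto simp: irr_hitting_def)
  then show "openin (DH X) \<O>"
    using openin_lower_vietoris_hits[OF U(1)] by (auto simp: DH_eq_subtopology openin_subtopology)
qed

lemma continuous_map_DH_iff: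
  "continuous_map Z (DH X) f \<longleftrightarrow>
     (\<forall>z\<in>topspace Z. irreducible_closedin X (f z)) \<and>
     (\<forall>U. openin X U \<longrightarrow> openin Z {z \<in> topspace Z. f z \<inter> U \<noteq> {}})"
proof -
  have "{z \<in> topspace Z. f z \<in> irr_hitting X U} = {z \<in> topspace Z. f z \<inter> U \<noteq> {}}"
    if "\<forall>z\<in>topspace Z. irreducible_closedin X (f z)" for U
    using that by (auto simp: irr_hitting_def)
  then show ?thesis
    unfolding continuous_map openin_DH_iff topspace_DH by (auto simp: image_subset_iff)
qed

lemma closedin_DH_iff: "closedin (DH X) \<C> \<longleftrightarrow> (\<exists>F. closedin X F \<and> \<C> = irr_within X F)"
proof -
  have compl: "topspace (DH X) - irr_within X F = irr_hitting X (topspace X - F)" for F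
    using irreducible_closedin_subset_topspace
    by (auto simp: topspace_DH irr_within_def irr_hitting_def)
  show ?thesis
  proof
    assume \<C>: "closedin (DH X) \<C>"
    then obtain U where U: "openin X U" "topspace (DH X) - \<C> = irr_hitting X U"
      by (auto simp: closedin_def openin_DH_iff)
    have "C \<subseteq> topspace X" if "C \<in> \<C>" for C
      using that closedin_subset[OF \<C>] irreducible_closedin_subset_topspace by (auto simp: topspace_DH)
    then have "\<C> = irr_within X (topspace X - U)"
      using U(2) closedin_subset[OF \<C>] by (auto simp: topspace_DH irr_within_def irr_hitting_def)
    then show "\<exists>F. closedin X F \<and> \<C> = irr_within X F" using U(1) by blast
  next
    assume "\<exists>F. closedin X F \<and> \<C> = irr_within X F"
    then obtain F where F: "closedin X F" "\<C> = irr_within X F" by blast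
    have "openin (DH X) (topspace (DH X) - \<C>)"
      unfolding F(2) compl openin_DH_iff using openin_diff[OF openin_topspace F(1)] by blast
    moreover have "\<C> \<subseteq> topspace (DH X)" by (auto simp: F(2) topspace_DH irr_within_def)
    ultimately show "closedin (DH X) \<C>" by (simp add: closedin_def)
  qed
qed

lemma irreducible_closedin_DH_irr_within_iff:
  assumes F: "closedin X F"
  shows "irreducible_closedin (DH X) (irr_within X F) \<longleftrightarrow> irreducible_closedin X F"
proof -
  have hits: "irr_within X F \<inter> irr_hitting X U \<noteq> {} \<longleftrightarrow> F \<inter> U \<noteq> {}" for U
    using F by (rule irr_within_Int_irr_hitting)
  have ne: "irr_within X F \<noteq> {} \<longleftrightarrow> F \<noteq> {}"
  proof
    assume "F \<noteq> {}"
    then have "F \<inter> topspace X \<noteq> {}" using closedin_subset[OF F] by blast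
    then show "irr_within X F \<noteq> {}" using hits by blast
  qed (auto simp: irr_within_def irreducible_closedin_def)
  have pairwise: "irr_within X F \<inter> irr_hitting X U \<inter> irr_hitting X V \<noteq> {} \<longleftrightarrow> F \<inter> U \<inter> V \<noteq> {}"
    if "openin X U" "openin X V" for U V
    using hits[of "U \<inter> V"] irr_hitting_Int[OF that] by (simp add: Int_assoc)
  have "closedin (DH X) (irr_within X F)" using F closedin_DH_iff by blast
  then have "irreducible_closedin (DH X) (irr_within X F) \<longleftrightarrow> irr_within X F \<noteq> {} \<and>
      (\<forall>U V. openin X U \<longrightarrow> openin X V \<longrightarrow> irr_within X F \<inter> irr_hitting X U \<noteq> {} \<longrightarrow>
         irr_within X F \<inter> irr_hitting X V \<noteq> {} \<longrightarrow> irr_within X F \<inter> irr_hitting X U \<inter> irr_hitting X V \<noteq> {})"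
    unfolding irreducible_closedin_def[of "DH X"] openin_DH_iff by auto
  also have "\<dots> \<longleftrightarrow> F \<noteq> {} \<and>
      (\<forall>U V. openin X U \<longrightarrow> openin X V \<longrightarrow> F \<inter> U \<noteq> {} \<longrightarrow> F \<inter> V \<noteq> {} \<longrightarrow> F \<inter> U \<inter> V \<noteq> {})"
    by (simp add: ne pairwise hits)
  also have "\<dots> \<longleftrightarrow> irreducible_closedin X F" using F by (simp add: irreducible_closedin_def)
  finally show ?thesis .
qed
lemma topspace_DH_DH: "topspace (DH (DH X)) = irr_within X ` {F. irreducible_closedin X F}"
proof -
  have "irreducible_closedin (DH X) \<C> \<longleftrightarrow> (\<exists>F. irreducible_closedin X F \<and> \<C> = irr_within X F)" for \<C>
    using closedin_DH_iff irreducible_closedin_DH_irr_within_iff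
    by (metis irreducible_closedin_imp_closedin)
  then show ?thesis by (auto simp: topspace_DH)
qed

lemma mH_irr_within:
  assumes F: "closedin X F"
  shows "mH X (irr_within X F) = F"
proof -
  let ?L = "lower_vietoris X"
  have "irr_within X F \<subseteq> {C. closedin X C \<and> C \<subseteq> F}"
    by (auto simp: irr_within_def irreducible_closedin_def)
  then have "?L closure_of irr_within X F \<subseteq> {C. closedin X C \<and> C \<subseteq> F}"
    using closedin_lower_vietoris_subsets[OF F] by (rule closure_of_minimal)
  moreover have "irr_within X F \<subseteq> ?L closure_of irr_within X F"
    by (rule closure_of_subset) (auto simp: irr_within_def irreducible_closedin_def topspace_lower_vietoris)
  ultimately have "\<Union>(?L closure_of irr_within X F) = F"
    using Union_irr_within[OF F] by blast
  then show ?thesis using F by (simp add: mH_def closure_of_closedin)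
qed

theorem homeomorphic_map_mH: "homeomorphic_map (DH (DH X)) (DH X) (mH X)"
proof -
  have mH_DH: "mH X (irr_within X F) = F" if "irreducible_closedin X F" for F
    using that by (intro mH_irr_within irreducible_closedin_imp_closedin)
  have irr_DH: "irreducible_closedin (DH X) (irr_within X F)" if "irreducible_closedin X F" for F
    using that irreducible_closedin_DH_irr_within_iff irreducible_closedin_imp_closedin by blast
  have hitting_DH: "irr_within X F \<inter> irr_hitting X U \<noteq> {} \<longleftrightarrow> F \<inter> U \<noteq> {}"
    if "irreducible_closedin X F" for F U
    using that by (intro irr_within_Int_irr_hitting irreducible_closedin_imp_closedin)
  have "continuous_map (DH (DH X)) (DH X) (mH X)"
    unfolding continuous_map_DH_iff
  proof (intro conjI ballI allI impI)
    fix U assume U: "openin X U"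
    have "mH X \<C> \<inter> U \<noteq> {} \<longleftrightarrow> \<C> \<inter> irr_hitting X U \<noteq> {}" if \<C>: "\<C> \<in> topspace (DH (DH X))" for \<C>
    proof -
      obtain F where "irreducible_closedin X F" "\<C> = irr_within X F"
        using \<C> by (auto simp: topspace_DH_DH)
      then show ?thesis using mH_DH hitting_DH by simp
    qed
    then have "{\<C> \<in> topspace (DH (DH X)). mH X \<C> \<inter> U \<noteq> {}} = irr_hitting (DH X) (irr_hitting X U)"
      by (auto simp: topspace_DH[of "DH X"] irr_hitting_def[of "DH X"])
    moreover have "openin (DH X) (irr_hitting X U)" using U openin_DH_iff by blast
    ultimately show "openin (DH (DH X)) {\<C> \<in> topspace (DH (DH X)). mH X \<C> \<inter> U \<noteq> {}}"
      using openin_DH_iff by metis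
  qed (auto simp: topspace_DH_DH mH_DH)
  moreover have "continuous_map (DH X) (DH (DH X)) (irr_within X)"
    unfolding continuous_map_DH_iff
  proof (intro conjI ballI allI impI)
    fix \<U> assume "openin (DH X) \<U>"
    then obtain U where U: "openin X U" "\<U> = irr_hitting X U" by (auto simp: openin_DH_iff)
    have "{F \<in> topspace (DH X). irr_within X F \<inter> \<U> \<noteq> {}} = irr_hitting X U"
      using hitting_DH by (auto simp: U(2) topspace_DH irr_hitting_def)
    then show "openin (DH X) {F \<in> topspace (DH X). irr_within X F \<inter> \<U> \<noteq> {}}"
      using U(1) openin_DH_iff by metis
  qed (auto simp: topspace_DH irr_DH)
  ultimately have "homeomorphic_maps (DH (DH X)) (DH X) (mH X) (irr_within X)"
    unfolding homeomorphic_maps_def topspace_DH_DH by (auto simp: topspace_DH mH_DH)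
  then show ?thesis by (auto simp: homeomorphic_map_maps)
qed


theorem theorem5p6:
  shows "(\<forall>X :: 'a measure. meas_iso (DP (DP X)) (DP X) (mP X))
       \<and> (\<forall>X :: 'b measure. meas_iso (DM (DM X)) (DM X) (mM X))
       \<and> (\<forall>X :: 'c topology. homeomorphic_map (DH (DH X)) (DH X) (mH X))"
  unfolding DP_eq_zero_one_algebra DM_eq_zero_one_algebra mP_def[abs_def] mM_def[abs_def]
  by (intro conjI allI meas_iso_join_zero_one_algebra homeomorphic_map_mH)

end
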